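(* Let $\Gamma$ be a gain operator on $\ell^\infty_+(\mathcal I)$ such that (i) $\Gamma$ satisfies the $\oplus$-MBI property, and (ii) for every $r\ge0$, the maximal fixed point $\sigma^*(r)$ of $\Gamma^\oplus_{r\mathbf 1}(s):=r\mathbf 1\oplus\Gamma(s)$ is semi-attractive from above, i.e. $\|(\Gamma^\oplus_{r\mathbf 1})^n(s)-\sigma^*(r)\|\to0$ for every $s\ge\sigma^*(r)$. Then there exists a $C^0$-path of decay for $\Gamma$.
   Context: Let $\mathcal I$ be a nonempty countable index set; $\ell^\infty_+(\mathcal I)$ is the cone of nonnegative real families $s=(s_i)_{i\in\mathcal I}$ with $\|s\|:=\sup_i|s_i|<\infty$, ordered componentwise; $\mathbf 1$ is the all-ones vector; $\oplus$ is the componentwise maximum. $\mathcal K_\infty$: continuous strictly increasing unbounded $\gamma:\mathbb R_+\to\mathbb R_+$ with $\gamma(0)=0$. For $\mathcal J\subset\mathcal I$, $s_{|\mathcal J}$ agrees with $s$ on $\mathcal J$ and is $0$ elsewhere. Gain operator: for each $i$ a finite (possibly empty) $\mathcal I_i\subset\mathcal I\setminus\{i\}$; directed graph $\mathcal G$ with vertices $\mathcal I$ and edges $ji$, $j\in\mathcal I_i$; a pointwise equicontinuous family $\gamma_{ij}\in\mathcal K_\infty$ ($ji\in E(\mathcal G)$); functions $\mu_i:\ell^\infty_+(\mathcal I)\to[0,\infty]$ with (M1) some $\xi\in\mathcal K_\infty$ has $\mu_i(0)=0$, $\mu_i(s)\ge\xi(\|s\|)$; (M2) $\mu_i$ monotone;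 (M3) for each finite $\mathcal J$, $\mu_i$ restricted to vectors vanishing off $\mathcal J$ is finite-valued and continuous; (M4) for each norm-bounded $A$ and $\varepsilon>0$ there is $\delta>0$ with $\sup_i|\mu_i(s_{|\mathcal I_i})-\mu_i(s^0_{|\mathcal I_i})|\le\varepsilon$ whenever $s^0\in A$, $\|s-s^0\|\le\delta$. $\Gamma_i(s):=\mu_i([\gamma_{ij}(s_j)]_{j\in\mathcal I_i})$ (argument zero outside $\mathcal I_i$). $\oplus$-MBI property: there is $\varphi\in\mathcal K_\infty$ such that for all $s,b$, $s\le b\oplus\Gamma(s)$ implies $\|s\|\le\varphi(\|b\|)$; under this property each operator $s\mapsto b\oplus\Gamma(s)$ has a maximal fixed point (one dominating every fixed point). $\Psi(\Gamma):=\{s:\Gamma(s)\le s\}$. A $C^0$-path of decay for $\Gamma$ is a path $\sigma:\mathbb R_+\to\ell^\infty_+(\mathcal I)$ with $\sigma(r)\in\Psi(\Gamma)$ for all $r$, $\varphi_{\min}(r)\mathbf 1\le\sigma(r)\le\varphi_{\max}(r)\mathbf 1$ for some $\varphi_{\min},\varphi_{\max}\in\mathcal K_\infty$, increasing and norm-continuous. *)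

theory Defs
  imports "HOL-Analysis.Analysis" "HOL-Library.Countable" "HOL-Library.Extended_Nonnegative_Real"
begin

text \<open>Elements of l-infinity_+(I) are functions 'i => real; the index set is the
  (countable, automatically nonempty) type 'i.\<close>

definition linf_pos :: "('i \<Rightarrow> real) \<Rightarrow> bool" where
  "linf_pos s \<longleftrightarrow> (\<forall>i. 0 \<le> s i) \<and> bdd_above (range (\<lambda>i. \<bar>s i\<bar>))"

definition supnorm :: "('i \<Rightarrow> real) \<Rightarrow> real" where
  "supnorm s = (SUP i. \<bar>s i\<bar>)"

definition Kinf :: "(real \<Rightarrow> real) \<Rightarrow> bool" where
  "Kinf g \<longleftrightarrow> continuous_on {0..} g \<and> strict_mono_on {0..} g \<and> g 0 = 0
     \<and> (\<forall>M. \<exists>x\<ge>0. g x > M)"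

definition restr :: "'i set \<Rightarrow> ('i \<Rightarrow> real) \<Rightarrow> ('i \<Rightarrow> real)" where
  "restr J s = (\<lambda>i. if i \<in> J then s i else 0)"

definition omax :: "('i \<Rightarrow> real) \<Rightarrow> ('i \<Rightarrow> real) \<Rightarrow> ('i \<Rightarrow> real)" where
  "omax s t = (\<lambda>i. max (s i) (t i))"

definition gvec :: "('i \<Rightarrow> 'i set) \<Rightarrow> ('i \<Rightarrow> 'i \<Rightarrow> real \<Rightarrow> real) \<Rightarrow> 'i \<Rightarrow> ('i \<Rightarrow> real) \<Rightarrow> ('i \<Rightarrow> real)" where
  "gvec Ii gam i s = (\<lambda>j. if j \<in> Ii i then gam i j (s j) else 0)"

text \<open>Gain operator Gamma_i(s) = mu_i([gamma_ij(s_j)]_{j in I_i}); finite-valued by (M3).\<close>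
definition Gam :: "('i \<Rightarrow> 'i set) \<Rightarrow> ('i \<Rightarrow> 'i \<Rightarrow> real \<Rightarrow> real) \<Rightarrow> ('i \<Rightarrow> ('i \<Rightarrow> real) \<Rightarrow> ennreal)
     \<Rightarrow> ('i \<Rightarrow> real) \<Rightarrow> ('i \<Rightarrow> real)" where
  "Gam Ii gam mu s = (\<lambda>i. enn2real (mu i (gvec Ii gam i s)))"

definition gain_operator :: "('i \<Rightarrow> 'i set) \<Rightarrow> ('i \<Rightarrow> 'i \<Rightarrow> real \<Rightarrow> real) \<Rightarrow> ('i \<Rightarrow> ('i \<Rightarrow> real) \<Rightarrow> ennreal) \<Rightarrow> bool" where
  "gain_operator Ii gam mu \<longleftrightarrow>
     (\<forall>i. finite (Ii i) \<and> i \<notin> Ii i)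
   \<and> (\<forall>i j. j \<in> Ii i \<longrightarrow> Kinf (gam i j))
   \<and> (\<forall>r\<ge>0. \<forall>\<epsilon>>0. \<exists>\<delta>>0. \<forall>i j r'. j \<in> Ii i \<and> r' \<ge> 0 \<and> \<bar>r' - r\<bar> < \<delta>
          \<longrightarrow> \<bar>gam i j r' - gam i j r\<bar> < \<epsilon>)
   \<comment> \<open>(M1)\<close>
   \<and> (\<exists>\<xi>. Kinf \<xi> \<and> (\<forall>i. mu i (\<lambda>_. 0) = 0 \<and>
          (\<forall>s. linf_pos s \<longrightarrow> ennreal (\<xi> (supnorm s)) \<le> mu i s)))
   \<comment> \<open>(M2)\<close>
   \<and> (\<forall>i s t. linf_pos s \<and> linf_pos t \<and> s \<le> t \<longrightarrow> mu i s \<le> mu i t)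
   \<comment> \<open>(M3)\<close>
   \<and> (\<forall>i J. finite J \<longrightarrow>
        (let V = {s. linf_pos s \<and> (\<forall>k. k \<notin> J \<longrightarrow> s k = 0)} in
          (\<forall>s\<in>V. mu i s \<noteq> \<infinity>) \<and>
          (\<forall>s0\<in>V. \<forall>\<epsilon>>0. \<exists>\<delta>>0. \<forall>s\<in>V. supnorm (s - s0) < \<delta>
              \<longrightarrow> \<bar>enn2real (mu i s) - enn2real (mu i s0)\<bar> < \<epsilon>)))
   \<comment> \<open>(M4)\<close>
   \<and> (\<forall>A R \<epsilon>. A \<subseteq> {s. linf_pos s \<and> supnorm s \<le> R} \<and> \<epsilon> > 0 \<longrightarrow>
        (\<exists>\<delta>>0. \<forall>s0\<in>A. \<forall>s. linf_pos s \<and> supnorm (s - s0) \<le> \<delta> \<longrightarrow>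
           (\<forall>i. \<bar>enn2real (mu i (restr (Ii i) s)) - enn2real (mu i (restr (Ii i) s0))\<bar> \<le> \<epsilon>)))"

definition oplus_MBI :: "(('i \<Rightarrow> real) \<Rightarrow> ('i \<Rightarrow> real)) \<Rightarrow> bool" where
  "oplus_MBI G \<longleftrightarrow> (\<exists>\<phi>. Kinf \<phi> \<and> (\<forall>s b. linf_pos s \<and> linf_pos b \<and> s \<le> omax b (G s)
        \<longrightarrow> supnorm s \<le> \<phi> (supnorm b)))"

definition max_fixed_point :: "(('i \<Rightarrow> real) \<Rightarrow> ('i \<Rightarrow> real)) \<Rightarrow> ('i \<Rightarrow> real) \<Rightarrow> bool" where
  "max_fixed_point T \<sigma> \<longleftrightarrow> linf_pos \<sigma> \<and> T \<sigma> = \<sigma> \<and> (\<forall>s. linf_pos s \<and> T s = s \<longrightarrow> s \<le> \<sigma>)"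

definition semi_attractive_above :: "(('i \<Rightarrow> real) \<Rightarrow> ('i \<Rightarrow> real)) \<Rightarrow> ('i \<Rightarrow> real) \<Rightarrow> bool" where
  "semi_attractive_above T \<sigma> \<longleftrightarrow>
     (\<forall>s. linf_pos s \<and> \<sigma> \<le> s \<longrightarrow> (\<lambda>n. supnorm ((T ^^ n) s - \<sigma>)) \<longlonglongrightarrow> 0)"

definition C0_path_of_decay :: "(('i \<Rightarrow> real) \<Rightarrow> ('i \<Rightarrow> real)) \<Rightarrow> (real \<Rightarrow> ('i \<Rightarrow> real)) \<Rightarrow> bool" where
  "C0_path_of_decay G \<sigma> \<longleftrightarrow>
     (\<forall>r\<ge>0. linf_pos (\<sigma> r) \<and> G (\<sigma> r) \<le> \<sigma> r)
   \<and> (\<exists>\<phi>min \<phi>max. Kinf \<phi>min \<and> Kinf \<phi>max \<and>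
        (\<forall>r\<ge>0. (\<lambda>_. \<phi>min r) \<le> \<sigma> r \<and> \<sigma> r \<le> (\<lambda>_. \<phi>max r)))
   \<and> (\<forall>r1 r2. 0 \<le> r1 \<and> r1 \<le> r2 \<longrightarrow> \<sigma> r1 \<le> \<sigma> r2)
   \<and> (\<forall>r\<ge>0. \<forall>\<epsilon>>0. \<exists>\<delta>>0. \<forall>r'. r' \<ge> 0 \<and> \<bar>r' - r\<bar> < \<delta> \<longrightarrow> supnorm (\<sigma> r' - \<sigma> r) < \<epsilon>)"

end

theory Submission
  imports Defs
begin

(* For r >= 0 the maximal fixed point sigma_star r of s |-> r1 (+) Gamma(s) is the supremum of all
   bounded subsolutions s <= r1 (+) Gamma(s); the MBI property bounds them by phi(r), so it exists,
   lies between r1 and phi(r)1 and increases with r.  Iterating the operator for r = 2^k from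
   sigma_star (2^(k+1)) gives a decreasing sequence s_0 >= s_1 >= ... with Gamma(s_n) <= s_(n+1),
   which converges uniformly to sigma_star (2^k) by semi-attractivity.  The piecewise linear
   interpolation of this sequence consists of decay points, and reparametrising n in [0, oo) to
   (2^k, 2^(k+1)] (n = 0 at the right end) and gluing over all k in Z yields a monotone path
   with r/2 <= sigma(r) <= phi(2r).  Each piece is Lipschitz in n, and at the dyadic points
   the uniform convergence supplies continuity from the right. *)

lemma supnorm_const: "supnorm (\<lambda>_::'i. c) = \<bar>c\<bar>"
  unfolding supnorm_def by simp

lemma abs_le_supnorm: "bdd_above (range (\<lambda>i. \<bar>x i\<bar>)) \<Longrightarrow> \<bar>x i\<bar> \<le> supnorm x"
  unfolding supnorm_def by (rule cSUP_upper) auto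

lemma supnorm_le: "(\<And>i. \<bar>x i\<bar> \<le> c) \<Longrightarrow> supnorm x \<le> c"
  unfolding supnorm_def by (rule cSUP_least) auto

lemma linf_posI: "(\<And>i. 0 \<le> x i) \<Longrightarrow> (\<And>i. x i \<le> c) \<Longrightarrow> linf_pos x"
  unfolding linf_pos_def by (auto intro!: bdd_aboveI[where M=c])

lemma linf_pos_le_supnorm: "linf_pos x \<Longrightarrow> x i \<le> supnorm x"
  using abs_le_supnorm[of x i] unfolding linf_pos_def by auto

lemma Kinf_mono: "Kinf g \<Longrightarrow> 0 \<le> x \<Longrightarrow> x \<le> y \<Longrightarrow> g x \<le> g y"
  unfolding Kinf_def using strict_mono_on_leD[of "{0..}" g x y] by auto

lemma Kinf_nonneg: "Kinf g \<Longrightarrow> 0 \<le> x \<Longrightarrow> 0 \<le> g x"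
  using Kinf_mono[of g 0 x] by (simp add: Kinf_def)

lemma Kinf_ident: "Kinf (\<lambda>r. r)"
proof -
  have "\<exists>x\<ge>0. M < (x::real)" for M by (intro exI[of _ "\<bar>M\<bar> + 1"]) auto
  then show ?thesis unfolding Kinf_def by (auto simp: strict_mono_on_def)
qed

lemma Kinf_compose_mult:
  assumes "Kinf g" "0 < c"
  shows "Kinf (\<lambda>r. g (c * r))"
  unfolding Kinf_def
proof (intro conjI allI)
  have cont: "continuous_on {0..} g" and strict: "strict_mono_on {0..} g"
    and unbounded: "\<forall>M. \<exists>x\<ge>0. g x > M" using assms(1) by (auto simp: Kinf_def)
  show "continuous_on {0..} (\<lambda>r. g (c * r))"
    using assms(2) by (intro continuous_on_compose2[OF cont] continuous_intros) auto
  show "strict_mono_on {0..} (\<lambda>r. g (c * r))"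
    using strict assms(2) by (auto simp: strict_mono_on_def)
  show "g (c * 0) = 0" using assms(1) by (simp add: Kinf_def)
  fix M
  obtain x where "x \<ge> 0" "g x > M" using unbounded by blast
  then show "\<exists>x\<ge>0. M < g (c * x)" using assms(2) by (intro exI[of _ "x / c"]) auto
qed

lemma Kinf_small:
  assumes "Kinf g" "0 < \<epsilon>"
  shows "\<exists>x>0. g x < \<epsilon>"
proof -
  have "continuous_on {0..} g" "g 0 = 0" using assms(1) by (auto simp: Kinf_def)
  then obtain d where "d > 0" and d: "\<And>x. 0 \<le> x \<Longrightarrow> \<bar>x\<bar> < d \<Longrightarrow> \<bar>g x\<bar> < \<epsilon>"
    using assms(2) unfolding continuous_on_iff dist_real_def by (metis atLeast_iff diff_zero order_refl)
  then have "\<bar>g (d / 2)\<bar> < \<epsilon>" by simp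
  then show ?thesis using \<open>d > 0\<close> by (intro exI[of _ "d / 2"]) auto
qed

definition pl_interp :: "(nat \<Rightarrow> real) \<Rightarrow> real \<Rightarrow> real" where
  "pl_interp f v =
     f (nat \<lfloor>v\<rfloor>) + (v - real (nat \<lfloor>v\<rfloor>)) * (f (Suc (nat \<lfloor>v\<rfloor>)) - f (nat \<lfloor>v\<rfloor>))"

lemma pl_interp_eq:
  assumes "real n \<le> v" "v \<le> real n + 1"
  shows "pl_interp f v = f n + (v - real n) * (f (Suc n) - f n)"
proof (cases "v = real n + 1")
  case True
  then have "nat \<lfloor>v\<rfloor> = Suc n" by simp
  then show ?thesis using True by (simp add: pl_interp_def algebra_simps)
next
  case False
  then have "\<lfloor>v\<rfloor> = int n" using assms by (intro floor_unique) auto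
  then have "nat \<lfloor>v\<rfloor> = n" by simp
  then show ?thesis by (simp add: pl_interp_def)
qed

lemma pl_interp_of_nat: "pl_interp f (real n) = f n"
  using pl_interp_eq[of n "real n" f] by simp

lemma nat_floor_bounds:
  assumes "0 \<le> v"
  shows "real (nat \<lfloor>v\<rfloor>) \<le> v \<and> v \<le> real (nat \<lfloor>v\<rfloor>) + 1"
proof -
  have "real (nat \<lfloor>v\<rfloor>) = real_of_int \<lfloor>v\<rfloor>" using assms by simp
  then show ?thesis using floor_correct[of v] by linarith
qed

lemma pl_interp_diff_same_cell:
  assumes "real n \<le> v" "v \<le> v'" "v' \<le> real n + 1"
  shows "pl_interp f v - pl_interp f v' = (v' - v) * (f n - f (Suc n))"
  using pl_interp_eq[of n v f] pl_interp_eq[of n v' f] assms by (simp add: algebra_simps)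

context
  fixes f :: "nat \<Rightarrow> real"
  assumes dec: "decseq f"
begin

lemma pl_interp_between:
  assumes "0 \<le> v"
  shows "f (Suc (nat \<lfloor>v\<rfloor>)) \<le> pl_interp f v" "pl_interp f v \<le> f (nat \<lfloor>v\<rfloor>)"
proof -
  define n where "n = nat \<lfloor>v\<rfloor>"
  have t: "0 \<le> v - real n" "v - real n \<le> 1"
    using nat_floor_bounds[OF assms] unfolding n_def by (linarith+)
  have d: "f (Suc n) - f n \<le> 0" using decseq_SucD[OF dec, of n] by simp
  have "1 * (f (Suc n) - f n) \<le> (v - real n) * (f (Suc n) - f n)"
    using t d by (intro mult_right_mono_neg) auto
  moreover have "(v - real n) * (f (Suc n) - f n) \<le> 0"
    using t d by (simp add: mult_nonneg_nonpos)
  ultimately show "f (Suc (nat \<lfloor>v\<rfloor>)) \<le> pl_interp f v" "pl_interp f v \<le> f (nat \<lfloor>v\<rfloor>)"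
    by (auto simp: pl_interp_def n_def[symmetric])
qed

lemma pl_interp_antimono:
  assumes "0 \<le> v" "v \<le> v'"
  shows "pl_interp f v' \<le> pl_interp f v"
proof -
  define n where "n = nat \<lfloor>v\<rfloor>"
  define m where "m = nat \<lfloor>v'\<rfloor>"
  have "n \<le> m" using assms by (simp add: n_def m_def floor_mono nat_mono)
  show ?thesis
  proof (cases "n = m")
    case True
    then have "pl_interp f v - pl_interp f v' = (v' - v) * (f n - f (Suc n))"
      using nat_floor_bounds[of v] nat_floor_bounds[of v'] assms
      by (intro pl_interp_diff_same_cell) (auto simp: n_def m_def)
    moreover have "0 \<le> (v' - v) * (f n - f (Suc n))"
      using assms decseq_SucD[OF dec, of n] by simp
    ultimately show ?thesis by simp
  next
    case False
    then have "pl_interp f v' \<le> f m" "f m \<le> f (Suc n)" "f (Suc n) \<le> pl_interp f v"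
      using pl_interp_between assms \<open>n \<le> m\<close> decseqD[OF dec]
      by (auto simp: n_def m_def)
    then show ?thesis by linarith
  qed
qed

lemma pl_interp_lipschitz:
  assumes gap: "\<And>n. f n - f (Suc n) \<le> B"
    and "0 \<le> v" "v \<le> v'" "v' \<le> v + 1"
  shows "pl_interp f v - pl_interp f v' \<le> B * (v' - v)"
proof -
  define n where "n = nat \<lfloor>v\<rfloor>"
  have v: "real n \<le> v" "v \<le> real n + 1"
    using nat_floor_bounds[OF assms(2)] unfolding n_def by (linarith+)
  have step: "pl_interp f w - pl_interp f w' \<le> B * (w' - w)"
    if "real m \<le> w" "w \<le> w'" "w' \<le> real m + 1" for m w w'
  proof -
    have "pl_interp f w - pl_interp f w' = (w' - w) * (f m - f (Suc m))"
      using that by (rule pl_interp_diff_same_cell)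
    also have "\<dots> \<le> (w' - w) * B" using that gap[of m] by (intro mult_left_mono) auto
    finally show ?thesis by (simp add: mult.commute)
  qed
  show ?thesis
  proof (cases "v' \<le> real n + 1")
    case True
    then show ?thesis using step[of n v v'] v assms by simp
  next
    case False
    have "pl_interp f v - pl_interp f (real (Suc n)) \<le> B * (real (Suc n) - v)"
      using step[of n v "real (Suc n)"] v by simp
    moreover have "pl_interp f (real (Suc n)) - pl_interp f v' \<le> B * (v' - real (Suc n))"
      using step[of "Suc n" "real (Suc n)" v'] v False assms by simp
    ultimately show ?thesis by (simp add: algebra_simps)
  qed
qed

end

definition dyadic :: "int \<Rightarrow> real" where
  "dyadic k = 2 powr real_of_int k"

definition dyadic_level :: "real \<Rightarrow> int" where
  "dyadic_level r = \<lceil>log 2 r\<rceil> - 1"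

definition dyadic_point :: "int \<Rightarrow> real \<Rightarrow> real" where
  "dyadic_point k v = dyadic k + dyadic k / (1 + v)"

definition dyadic_coord :: "int \<Rightarrow> real \<Rightarrow> real" where
  "dyadic_coord k r = dyadic k / (r - dyadic k) - 1"

lemma dyadic_pos: "0 < dyadic k"
  by (simp add: dyadic_def)

lemma dyadic_nonneg: "0 \<le> dyadic k"
  by (simp add: dyadic_def)

lemma dyadic_succ: "dyadic (k + 1) = 2 * dyadic k"
  by (simp add: dyadic_def powr_add)

lemma dyadic_mono: "k \<le> k' \<Longrightarrow> dyadic k \<le> dyadic k'"
  by (simp add: dyadic_def)

lemma dyadic_le_succ: "dyadic k \<le> dyadic (k + 1)"
  by (simp add: dyadic_mono)

lemma dyadic_less_iff_log: "0 < r \<Longrightarrow> dyadic k < r \<longleftrightarrow> real_of_int k < log 2 r"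
  by (simp add: dyadic_def powr_less_iff)

lemma dyadic_le_iff_log: "0 < r \<Longrightarrow> r \<le> dyadic k \<longleftrightarrow> log 2 r \<le> real_of_int k"
  by (simp add: dyadic_def le_powr_iff)

lemma dyadic_level_bounds:
  assumes "0 < r"
  shows "dyadic (dyadic_level r) < r" "r \<le> dyadic (dyadic_level r + 1)"
  using assms by (simp_all add: dyadic_less_iff_log dyadic_le_iff_log dyadic_level_def) linarith

lemma dyadic_level_unique:
  assumes "dyadic k < r" "r \<le> dyadic (k + 1)"
  shows "dyadic_level r = k"
proof -
  have "0 < r" using assms(1) dyadic_pos[of k] by linarith
  then have "\<lceil>log 2 r\<rceil> = k + 1"
    using assms by (intro ceiling_unique) (auto simp: dyadic_less_iff_log dyadic_le_iff_log)
  then show ?thesis by (simp add: dyadic_level_def)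
qed

lemma dyadic_point_bounds:
  assumes "0 \<le> v"
  shows "dyadic k < dyadic_point k v" "dyadic_point k v \<le> dyadic (k + 1)"
  using assms dyadic_pos[of k] by (simp_all add: dyadic_point_def dyadic_succ divide_le_eq)

lemma dyadic_point_zero: "dyadic_point k 0 = dyadic (k + 1)"
  by (simp add: dyadic_point_def dyadic_succ)

lemma dyadic_point_strict_antimono: "0 \<le> v \<Longrightarrow> v < v' \<Longrightarrow> dyadic_point k v' < dyadic_point k v"
  using dyadic_pos[of k] by (simp add: dyadic_point_def frac_less2)

lemma dyadic_coord_point: "0 \<le> v \<Longrightarrow> dyadic_coord k (dyadic_point k v) = v"
  using dyadic_pos[of k] by (simp add: dyadic_coord_def dyadic_point_def)

lemma dyadic_point_cover:
  assumes "0 < r"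
  obtains k v where "0 \<le> v" "r = dyadic_point k v"
proof
  define k where "k = dyadic_level r"
  have k: "dyadic k < r" "r \<le> dyadic (k + 1)"
    using dyadic_level_bounds[OF assms] by (simp_all add: k_def)
  show "0 \<le> dyadic_coord k r"
    using k by (simp add: dyadic_coord_def dyadic_succ le_divide_eq)
  show "r = dyadic_point k (dyadic_coord k r)"
    using k dyadic_pos[of k] by (simp add: dyadic_coord_def dyadic_point_def)
qed

lemma dyadic_level_point: "0 \<le> v \<Longrightarrow> dyadic_level (dyadic_point k v) = k"
  using dyadic_point_bounds by (intro dyadic_level_unique) auto

locale monotone_MBI =
  fixes G :: "('i \<Rightarrow> real) \<Rightarrow> 'i \<Rightarrow> real" and \<phi> :: "real \<Rightarrow> real"
  assumes mono: "\<And>s t. (\<And>i. 0 \<le> s i) \<Longrightarrow> s \<le> t \<Longrightarrow> G s \<le> G t"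
    and Kinf_\<phi>: "Kinf \<phi>"
    and MBI: "\<And>s b. linf_pos s \<Longrightarrow> linf_pos b \<Longrightarrow> s \<le> omax b (G s) \<Longrightarrow> supnorm s \<le> \<phi> (supnorm b)"
begin

definition T :: "real \<Rightarrow> ('i \<Rightarrow> real) \<Rightarrow> 'i \<Rightarrow> real" where
  "T r s = omax (\<lambda>_. r) (G s)"

definition subsolutions :: "real \<Rightarrow> ('i \<Rightarrow> real) set" where
  "subsolutions r = {s. linf_pos s \<and> s \<le> T r s}"

definition sigma_star :: "real \<Rightarrow> 'i \<Rightarrow> real" where
  "sigma_star r = (\<lambda>i. SUP s\<in>subsolutions r. s i)"

lemma T_apply: "T r s i = max r (G s i)"
  by (simp add: T_def omax_def)

lemma T_mono:
  assumes "\<And>i. 0 \<le> s i" "s \<le> t" "r \<le> r'"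
  shows "T r s \<le> T r' t"
proof -
  have "G s \<le> G t" using assms(1,2) by (rule mono)
  then show ?thesis using assms(3) unfolding le_fun_def T_apply by (metis max.mono)
qed

lemma const_subsolution: "0 \<le> r \<Longrightarrow> (\<lambda>_. r) \<in> subsolutions r"
  unfolding subsolutions_def by (auto intro!: linf_posI simp: le_fun_def T_apply)

lemma subsolution_le_\<phi>:
  assumes "0 \<le> r" "s \<in> subsolutions r"
  shows "s i \<le> \<phi> r"
proof -
  have s: "linf_pos s" "s \<le> omax (\<lambda>_. r) (G s)"
    using assms(2) by (auto simp: subsolutions_def T_def)
  have "linf_pos (\<lambda>_::'i. r)" using assms(1) by (auto intro: linf_posI)
  then have "supnorm s \<le> \<phi> r" using MBI[OF s(1) _ s(2)] assms(1) by (simp add: supnorm_const)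
  then show ?thesis using linf_pos_le_supnorm[OF s(1), of i] by linarith
qed

context
  fixes r :: real
  assumes r: "0 \<le> r"
begin

lemma subsolution_le_sigma_star: "s \<in> subsolutions r \<Longrightarrow> s \<le> sigma_star r"
  unfolding le_fun_def sigma_star_def using subsolution_le_\<phi>[OF r]
  by (auto intro!: cSUP_upper bdd_aboveI[where M="\<phi> r"])

lemma sigma_star_ge: "r \<le> sigma_star r i"
  using subsolution_le_sigma_star[OF const_subsolution[OF r]] by (auto simp: le_fun_def)

lemma sigma_star_nonneg: "0 \<le> sigma_star r i"
  using sigma_star_ge[of i] r by linarith

lemma sigma_star_le_\<phi>: "sigma_star r i \<le> \<phi> r"
  unfolding sigma_star_def using const_subsolution[OF r] subsolution_le_\<phi>[OF r]
  by (auto intro!: cSUP_least)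

lemma linf_pos_sigma_star: "linf_pos (sigma_star r)"
  using sigma_star_nonneg sigma_star_le_\<phi> by (rule linf_posI)

lemma sigma_star_le_T: "sigma_star r \<le> T r (sigma_star r)"
  unfolding le_fun_def
proof
  fix i
  have "s i \<le> T r (sigma_star r) i" if s: "s \<in> subsolutions r" for s
  proof -
    have "s i \<le> T r s i" using s by (auto simp: subsolutions_def le_fun_def)
    also have "T r s \<le> T r (sigma_star r)"
      using s subsolution_le_sigma_star by (intro T_mono) (auto simp: subsolutions_def linf_pos_def)
    finally show ?thesis by (simp add: le_fun_def)
  qed
  then show "sigma_star r i \<le> T r (sigma_star r) i"
    unfolding sigma_star_def using const_subsolution[OF r] by (auto intro!: cSUP_least)
qed

lemma T_sigma_star: "T r (sigma_star r) = sigma_star r"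
proof -
  define M where "M = \<phi> r + 1"
  \<comment> \<open>\<open>G\<close> need not preserve boundedness, so \<open>T r (sigma_star r)\<close> is truncated at \<open>M\<close>
    before it is tested as a subsolution.\<close>
  define t where "t = (\<lambda>i. min (T r (sigma_star r) i) M)"
  have below_M: "sigma_star r i < M" for i using sigma_star_le_\<phi>[of i] by (simp add: M_def)
  have "sigma_star r \<le> t"
    using sigma_star_le_T below_M unfolding t_def le_fun_def by (auto intro: less_imp_le)
  then have t_nonneg: "0 \<le> t i" for i
    using sigma_star_nonneg[of i] by (auto simp: le_fun_def intro: order_trans)
  have "t \<le> T r (sigma_star r)" by (auto simp: t_def le_fun_def)
  also have "\<dots> \<le> T r t" using \<open>sigma_star r \<le> t\<close> sigma_star_nonneg by (intro T_mono) auto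
  finally have "t \<in> subsolutions r"
    using t_nonneg by (auto simp: subsolutions_def t_def intro!: linf_posI[where c=M])
  then have "t \<le> sigma_star r" by (rule subsolution_le_sigma_star)
  then have "T r (sigma_star r) \<le> sigma_star r"
    using below_M unfolding t_def le_fun_def by (metis min_less_iff_conj not_le)
  then show ?thesis using sigma_star_le_T by (rule antisym)
qed

lemma max_fixed_point_sigma_star: "max_fixed_point (\<lambda>s. omax (\<lambda>_. r) (G s)) (sigma_star r)"
  using linf_pos_sigma_star T_sigma_star subsolution_le_sigma_star
  unfolding max_fixed_point_def subsolutions_def T_def by auto

end

lemma sigma_star_mono:
  assumes "0 \<le> r" "r \<le> r'"
  shows "sigma_star r \<le> sigma_star r'"
proof -
  have "sigma_star r = T r (sigma_star r)" using T_sigma_star[OF assms(1)] by simp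
  also have "\<dots> \<le> T r' (sigma_star r)" using sigma_star_nonneg[OF assms(1)] assms by (intro T_mono) auto
  finally have "sigma_star r \<in> subsolutions r'"
    using linf_pos_sigma_star[OF assms(1)] by (simp add: subsolutions_def)
  then show ?thesis using assms by (intro subsolution_le_sigma_star) auto
qed

definition descent :: "real \<Rightarrow> real \<Rightarrow> nat \<Rightarrow> 'i \<Rightarrow> real" where
  "descent r r' n = (T r ^^ n) (sigma_star r')"

definition descent_interp :: "real \<Rightarrow> real \<Rightarrow> real \<Rightarrow> 'i \<Rightarrow> real" where
  "descent_interp r r' v = (\<lambda>i. pl_interp (\<lambda>n. descent r r' n i) v)"

context
  fixes r r' :: real
  assumes r: "0 \<le> r" "r \<le> r'"
begin

lemma descent_0: "descent r r' 0 = sigma_star r'"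
  by (simp add: descent_def)

lemma descent_Suc: "descent r r' (Suc n) = T r (descent r r' n)"
  by (simp add: descent_def)

lemma sigma_star_le_descent: "sigma_star r \<le> descent r r' n"
proof (induction n)
  case 0
  show ?case using sigma_star_mono r by (simp add: descent_0)
next
  case (Suc n)
  have "sigma_star r = T r (sigma_star r)" using T_sigma_star r by simp
  also have "\<dots> \<le> T r (descent r r' n)" using Suc sigma_star_nonneg r by (intro T_mono) auto
  finally show ?case by (simp add: descent_Suc)
qed

lemma descent_nonneg: "0 \<le> descent r r' n i"
  using sigma_star_le_descent[of n] sigma_star_nonneg[OF r(1), of i]
  by (auto simp: le_fun_def intro: order_trans)

lemma descent_Suc_le: "descent r r' (Suc n) \<le> descent r r' n"
proof (induction n)
  case 0
  have "T r (sigma_star r') \<le> T r' (sigma_star r')"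
    using sigma_star_nonneg r by (intro T_mono) auto
  then show ?case using T_sigma_star r by (simp add: descent_Suc descent_0)
next
  case (Suc n)
  show ?case using Suc descent_nonneg[of "Suc n"] unfolding descent_Suc by (intro T_mono) auto
qed

lemma decseq_descent: "decseq (\<lambda>n. descent r r' n i)"
  using descent_Suc_le by (intro decseq_SucI) (simp add: le_fun_def)

lemma descent_le_sigma_star: "descent r r' n i \<le> sigma_star r' i"
  using decseqD[OF decseq_descent, of 0 n] by (simp add: descent_0)

lemma G_descent_le: "G (descent r r' n) \<le> descent r r' (Suc n)"
  by (simp add: descent_Suc le_fun_def T_apply)

lemma descent_interp_of_nat: "descent_interp r r' (real n) = descent r r' n"
  by (simp add: descent_interp_def pl_interp_of_nat fun_eq_iff)

lemma descent_interp_0: "descent_interp r r' 0 = sigma_star r'"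
  using descent_interp_of_nat[of 0] by (simp add: descent_0)

lemma descent_interp_between:
  assumes "0 \<le> v"
  shows "sigma_star r \<le> descent_interp r r' v" "descent_interp r r' v \<le> sigma_star r'"
proof -
  show "sigma_star r \<le> descent_interp r r' v"
    using pl_interp_between(1)[OF decseq_descent assms] sigma_star_le_descent
    unfolding descent_interp_def le_fun_def by (meson order_trans)
  show "descent_interp r r' v \<le> sigma_star r'"
    using pl_interp_between(2)[OF decseq_descent assms] descent_le_sigma_star
    unfolding descent_interp_def le_fun_def by (meson order_trans)
qed

text \<open>Between consecutive iterates \<open>s_(n+1) \<le> s_n\<close> with \<open>G s_n \<le> s_(n+1)\<close>, every \<open>s\<close>
  satisfies \<open>G s \<le> G s_n \<le> s_(n+1) \<le> s\<close>.\<close>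

lemma descent_interp_decay:
  assumes "0 \<le> v"
  shows "G (descent_interp r r' v) \<le> descent_interp r r' v"
proof -
  define n where "n = nat \<lfloor>v\<rfloor>"
  have "descent_interp r r' v \<le> descent r r' n"
    using pl_interp_between(2)[OF decseq_descent assms] by (simp add: descent_interp_def le_fun_def n_def)
  moreover have "0 \<le> descent_interp r r' v i" for i
    using descent_interp_between(1)[OF assms] sigma_star_nonneg[OF r(1), of i]
    by (auto simp: le_fun_def intro: order_trans)
  ultimately have "G (descent_interp r r' v) \<le> G (descent r r' n)" by (intro mono)
  also have "\<dots> \<le> descent r r' (Suc n)" by (rule G_descent_le)
  also have "\<dots> \<le> descent_interp r r' v"
    using pl_interp_between(1)[OF decseq_descent assms] by (simp add: descent_interp_def le_fun_def n_def)
  finally show ?thesis .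
qed

lemma descent_interp_antimono: "0 \<le> v \<Longrightarrow> v \<le> v' \<Longrightarrow> descent_interp r r' v' \<le> descent_interp r r' v"
  using pl_interp_antimono[OF decseq_descent] by (simp add: descent_interp_def le_fun_def)

lemma descent_interp_equicontinuous:
  assumes "0 < \<epsilon>"
  obtains \<eta> where "0 < \<eta>"
    "\<And>v v' i. 0 \<le> v \<Longrightarrow> v \<le> v' \<Longrightarrow> v' \<le> v + \<eta> \<Longrightarrow> descent_interp r r' v i - descent_interp r r' v' i \<le> \<epsilon>"
proof
  define B where "B = \<phi> r' + 1"
  have "0 < B" using Kinf_nonneg[OF Kinf_\<phi>, of r'] r by (simp add: B_def)
  show "0 < min 1 (\<epsilon> / B)" using \<open>0 < B\<close> assms by simp
  fix v v' i assume v: "0 \<le> v" "v \<le> v'" "v' \<le> v + min 1 (\<epsilon> / B)"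
  have gap: "descent r r' n i - descent r r' (Suc n) i \<le> B" for n
    using descent_le_sigma_star[of n i] sigma_star_le_\<phi>[of r' i] descent_nonneg[of "Suc n" i] r
    by (simp add: B_def)
  have "descent_interp r r' v i - descent_interp r r' v' i \<le> B * (v' - v)"
    unfolding descent_interp_def using v by (intro pl_interp_lipschitz[OF decseq_descent gap]) auto
  also have "\<dots> \<le> B * (\<epsilon> / B)" using v \<open>0 < B\<close> by (intro mult_left_mono) auto
  finally show "descent_interp r r' v i - descent_interp r r' v' i \<le> \<epsilon>" using \<open>0 < B\<close> by simp
qed

lemma descent_interp_tends_to_sigma_star:
  assumes "semi_attractive_above (T r) (sigma_star r)" "0 < \<epsilon>"
  obtains N where "\<And>i. descent_interp r r' (real N) i \<le> sigma_star r i + \<epsilon>"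
proof -
  have "(\<lambda>n. supnorm (descent r r' n - sigma_star r)) \<longlonglongrightarrow> 0"
    using assms(1) linf_pos_sigma_star sigma_star_mono r
    unfolding semi_attractive_above_def descent_def by auto
  from LIMSEQ_D[OF this assms(2)] obtain N where N: "\<bar>supnorm (descent r r' N - sigma_star r)\<bar> < \<epsilon>"
    by (metis diff_zero order_refl real_norm_def)
  have "\<bar>(descent r r' N - sigma_star r) i\<bar> \<le> \<phi> r'" for i
    using sigma_star_le_descent[of N] descent_le_sigma_star[of N i] sigma_star_le_\<phi>[of r' i]
      sigma_star_nonneg[OF r(1), of i] r
    by (auto simp: le_fun_def)
  then have bdd: "bdd_above (range (\<lambda>i. \<bar>(descent r r' N - sigma_star r) i\<bar>))"
    by (auto intro: bdd_aboveI[where M="\<phi> r'"])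
  have "descent r r' N i \<le> sigma_star r i + \<epsilon>" for i
    using abs_le_supnorm[OF bdd, of i] N unfolding fun_diff_def by (auto simp: abs_le_iff abs_less_iff)
  then show ?thesis using that[of N] by (simp add: descent_interp_of_nat)
qed

end

end

lemma monotone_family_supnorm_continuous:
  fixes p :: "real \<Rightarrow> 'i \<Rightarrow> real"
  assumes mono: "\<And>r r'. 0 \<le> r \<Longrightarrow> r \<le> r' \<Longrightarrow> p r \<le> p r'"
    and right: "\<And>\<epsilon>. 0 < \<epsilon> \<Longrightarrow> \<exists>b>r. \<forall>i. p b i \<le> p r i + \<epsilon>"
    and left: "\<And>\<epsilon>. 0 < r \<Longrightarrow> 0 < \<epsilon> \<Longrightarrow> \<exists>a\<ge>0. a < r \<and> (\<forall>i. p r i - \<epsilon> \<le> p a i)"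
    and r: "0 \<le> r" and \<epsilon>: "0 < \<epsilon>"
  shows "\<exists>\<delta>>0. \<forall>r'. r' \<ge> 0 \<and> \<bar>r' - r\<bar> < \<delta> \<longrightarrow> supnorm (p r' - p r) < \<epsilon>"
proof -
  obtain b where "r < b" and b: "\<And>i. p b i \<le> p r i + \<epsilon> / 2"
    using right[of "\<epsilon> / 2"] \<epsilon> by auto
  obtain a where "0 \<le> a" "a \<le> r" "0 < r \<Longrightarrow> a < r" and a: "\<And>i. p r i - \<epsilon> / 2 \<le> p a i"
  proof (cases "r = 0")
    case True
    then show ?thesis using that[of 0] \<epsilon> by simp
  next
    case False
    then show ?thesis using left[of "\<epsilon> / 2"] r \<epsilon> that by (metis le_less half_gt_zero)
  qed
  have near: "\<bar>p r' i - p r i\<bar> \<le> \<epsilon> / 2" if "a \<le> r'" "r' \<le> b" for r' i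
  proof (cases "r \<le> r'")
    case True
    then have "p r i \<le> p r' i" "p r' i \<le> p b i"
      using mono[of r r'] mono[of r' b] r that by (auto simp: le_fun_def)
    then show ?thesis using b[of i] by linarith
  next
    case False
    then have "p a i \<le> p r' i" "p r' i \<le> p r i"
      using mono[of a r'] mono[of r' r] \<open>0 \<le> a\<close> that by (auto simp: le_fun_def)
    then show ?thesis using a[of i] by linarith
  qed
  define \<delta> where "\<delta> = (if r = 0 then b else min (b - r) (r - a))"
  have "0 < \<delta>" using \<open>r < b\<close> \<open>0 < r \<Longrightarrow> a < r\<close> r by (auto simp: \<delta>_def)
  moreover have "supnorm (p r' - p r) < \<epsilon>" if "0 \<le> r'" "\<bar>r' - r\<bar> < \<delta>" for r'
  proof -
    have "a \<le> r'" "r' \<le> b"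
      using that \<open>0 \<le> a\<close> \<open>a \<le> r\<close> by (auto simp: \<delta>_def split: if_splits)
    then have "supnorm (p r' - p r) \<le> \<epsilon> / 2" using near by (intro supnorm_le) simp
    then show ?thesis using \<epsilon> by linarith
  qed
  ultimately show ?thesis by blast
qed

locale decay_path_construction = monotone_MBI +
  assumes G_zero: "G (\<lambda>_. 0) = (\<lambda>_. 0)"
    and attractive: "\<And>r \<sigma>. 0 \<le> r \<Longrightarrow> max_fixed_point (\<lambda>s. omax (\<lambda>_. r) (G s)) \<sigma>
      \<Longrightarrow> semi_attractive_above (\<lambda>s. omax (\<lambda>_. r) (G s)) \<sigma>"
begin

abbreviation dyadic_piece where
  "dyadic_piece k \<equiv> descent_interp (dyadic k) (dyadic (k + 1))"

definition decay_path where
  "decay_path r = (if r \<le> 0 then (\<lambda>_. 0)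
     else dyadic_piece (dyadic_level r) (dyadic_coord (dyadic_level r) r))"

lemma decay_path_nonpos: "r \<le> 0 \<Longrightarrow> decay_path r = (\<lambda>_. 0)"
  by (simp add: decay_path_def)

lemma decay_path_dyadic_point: "0 \<le> v \<Longrightarrow> decay_path (dyadic_point k v) = dyadic_piece k v"
  using dyadic_point_bounds(1)[of v k] dyadic_pos[of k]
  by (simp add: decay_path_def dyadic_level_point dyadic_coord_point)

lemmas dyadic_piece_0 = descent_interp_0[OF dyadic_nonneg dyadic_le_succ]
  and dyadic_piece_between = descent_interp_between[OF dyadic_nonneg dyadic_le_succ]
  and dyadic_piece_decay = descent_interp_decay[OF dyadic_nonneg dyadic_le_succ]
  and dyadic_piece_antimono = descent_interp_antimono[OF dyadic_nonneg dyadic_le_succ]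
  and dyadic_piece_equicontinuous = descent_interp_equicontinuous[OF dyadic_nonneg dyadic_le_succ]

lemma decay_path_bounds:
  assumes "0 \<le> r"
  shows "r / 2 \<le> decay_path r i" "decay_path r i \<le> \<phi> (2 * r)"
proof -
  have "r / 2 \<le> decay_path r i \<and> decay_path r i \<le> \<phi> (2 * r)"
  proof (cases "r = 0")
    case True
    then show ?thesis using Kinf_\<phi> by (simp add: decay_path_nonpos Kinf_def)
  next
    case False
    with assms have "0 < r" by simp
    then obtain k v where v: "0 \<le> v" and rkv: "r = dyadic_point k v"
      by (rule dyadic_point_cover)
    have "r / 2 \<le> dyadic k" using dyadic_point_bounds(2)[OF v, of k] rkv by (simp add: dyadic_succ)
    also have "\<dots> \<le> sigma_star (dyadic k) i" by (rule sigma_star_ge[OF dyadic_nonneg])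
    also have "\<dots> \<le> decay_path r i"
      using dyadic_piece_between(1)[OF v] rkv by (simp add: decay_path_dyadic_point[OF v] le_fun_def)
    finally have "r / 2 \<le> decay_path r i" .
    have "decay_path r i \<le> sigma_star (dyadic (k + 1)) i"
      using dyadic_piece_between(2)[OF v] rkv by (simp add: decay_path_dyadic_point[OF v] le_fun_def)
    also have "\<dots> \<le> \<phi> (dyadic (k + 1))" by (rule sigma_star_le_\<phi>[OF dyadic_nonneg])
    also have "\<dots> \<le> \<phi> (2 * r)"
      using dyadic_point_bounds(1)[OF v, of k] rkv dyadic_nonneg[of "k + 1"]
      by (intro Kinf_mono[OF Kinf_\<phi>]) (auto simp: dyadic_succ)
    finally show ?thesis using \<open>r / 2 \<le> decay_path r i\<close> by simp
  qed
  then show "r / 2 \<le> decay_path r i" "decay_path r i \<le> \<phi> (2 * r)" by auto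
qed

lemma decay_path_nonneg: "0 \<le> r \<Longrightarrow> 0 \<le> decay_path r i"
  using decay_path_bounds(1)[of r i] by linarith

lemma linf_pos_decay_path: "0 \<le> r \<Longrightarrow> linf_pos (decay_path r)"
  using decay_path_nonneg decay_path_bounds(2) by (rule linf_posI)

lemma decay_path_decay:
  assumes "0 \<le> r"
  shows "G (decay_path r) \<le> decay_path r"
proof (cases "r = 0")
  case True
  then show ?thesis by (simp add: decay_path_nonpos G_zero)
next
  case False
  with assms have "0 < r" by simp
  then obtain k v where "0 \<le> v" "r = dyadic_point k v"
    by (rule dyadic_point_cover)
  then show ?thesis
    using dyadic_piece_decay by (simp add: decay_path_dyadic_point)
qed

lemma decay_path_mono:
  assumes "0 \<le> r1" "r1 \<le> r2"
  shows "decay_path r1 \<le> decay_path r2"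
proof (cases "r1 = 0")
  case True
  then show ?thesis using decay_path_nonneg[of r2] assms by (auto simp: decay_path_nonpos le_fun_def)
next
  case False
  with assms have "0 < r1" "0 < r2" by simp_all
  obtain k1 v1 where v1: "0 \<le> v1" "r1 = dyadic_point k1 v1"
    using \<open>0 < r1\<close> by (rule dyadic_point_cover)
  obtain k2 v2 where v2: "0 \<le> v2" "r2 = dyadic_point k2 v2"
    using \<open>0 < r2\<close> by (rule dyadic_point_cover)
  note v = v1 v2
  consider "k1 = k2" | "k1 < k2" | "k2 < k1" by linarith
  then show ?thesis
  proof cases
    case 1
    have "v2 \<le> v1"
    proof (rule ccontr)
      assume "\<not> v2 \<le> v1"
      then have "r2 < r1" using v 1 dyadic_point_strict_antimono[of v1 v2 k1] by simp
      then show False using assms by simp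
    qed
    then show ?thesis
      using v 1 dyadic_piece_antimono by (simp add: decay_path_dyadic_point)
  next
    case 2
    have "decay_path r1 \<le> sigma_star (dyadic (k1 + 1))"
      using v dyadic_piece_between(2) by (simp add: decay_path_dyadic_point)
    also have "\<dots> \<le> sigma_star (dyadic k2)"
      using 2 by (intro sigma_star_mono dyadic_nonneg dyadic_mono) simp
    also have "\<dots> \<le> decay_path r2"
      using v dyadic_piece_between(1) by (simp add: decay_path_dyadic_point)
    finally show ?thesis .
  next
    case 3
    have "r2 \<le> dyadic (k2 + 1)" using v dyadic_point_bounds(2) by simp
    also have "\<dots> \<le> dyadic k1" using 3 by (intro dyadic_mono) simp
    also have "\<dots> < r1" using v dyadic_point_bounds(1) by simp
    finally show ?thesis using assms by simp
  qed
qed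

lemma semi_attractive_sigma_star: "0 \<le> r \<Longrightarrow> semi_attractive_above (T r) (sigma_star r)"
  using attractive[OF _ max_fixed_point_sigma_star] by (simp add: T_def[abs_def])

text \<open>At \<open>r = 2^(k+1)\<close> the path passes from one piece to the next; continuity from the
  right there is exactly the semi-attractivity of \<open>sigma_star (2^(k+1))\<close>.\<close>

lemma decay_path_right_approx:
  assumes "0 \<le> r" "0 < \<epsilon>"
  shows "\<exists>b>r. \<forall>i. decay_path b i \<le> decay_path r i + \<epsilon>"
proof (cases "r = 0")
  case True
  obtain x where "0 < x" "\<phi> x < \<epsilon>" using Kinf_small[OF Kinf_\<phi> assms(2)] by blast
  then have "decay_path (x / 2) i \<le> decay_path r i + \<epsilon>" for i
    using decay_path_bounds(2)[of "x / 2" i] True by (simp add: decay_path_nonpos)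
  then show ?thesis using \<open>0 < x\<close> True by (intro exI[of _ "x / 2"]) auto
next
  case False
  with assms have "0 < r" by simp
  then obtain k v where v: "0 \<le> v" and rkv: "r = dyadic_point k v"
    by (rule dyadic_point_cover)
  show ?thesis
  proof (cases "v = 0")
    case False
    obtain \<eta> where "0 < \<eta>" and \<eta>:
      "\<And>w w' i. 0 \<le> w \<Longrightarrow> w \<le> w' \<Longrightarrow> w' \<le> w + \<eta> \<Longrightarrow> dyadic_piece k w i - dyadic_piece k w' i \<le> \<epsilon>"
      using dyadic_piece_equicontinuous[OF assms(2)] by blast
    define w where "w = max 0 (v - \<eta>)"
    have w: "0 \<le> w" "w < v" "v \<le> w + \<eta>" using v False \<open>0 < \<eta>\<close> by (auto simp: w_def)
    then have "r < dyadic_point k w" using rkv dyadic_point_strict_antimono by simp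
    moreover have "decay_path (dyadic_point k w) i \<le> decay_path r i + \<epsilon>" for i
      using \<eta>[of w v i] w v rkv by (simp add: decay_path_dyadic_point)
    ultimately show ?thesis by blast
  next
    case True
    then have r: "r = dyadic (k + 1)" using rkv by (simp add: dyadic_point_zero)
    obtain N where N: "\<And>i. dyadic_piece (k + 1) (real N) i \<le> sigma_star (dyadic (k + 1)) i + \<epsilon>"
      using descent_interp_tends_to_sigma_star[OF dyadic_nonneg dyadic_le_succ
          semi_attractive_sigma_star[OF dyadic_nonneg] assms(2)] by blast
    have "decay_path r = sigma_star (dyadic (k + 1))"
      using rkv True dyadic_piece_0 by (simp add: decay_path_dyadic_point)
    moreover have "r < dyadic_point (k + 1) (real N)" using r dyadic_point_bounds(1) by simp
    ultimately show ?thesis using N decay_path_dyadic_point[of "real N" "k + 1"] by auto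
  qed
qed

lemma decay_path_left_approx:
  assumes "0 < r" "0 < \<epsilon>"
  shows "\<exists>a\<ge>0. a < r \<and> (\<forall>i. decay_path r i - \<epsilon> \<le> decay_path a i)"
proof -
  obtain k v where v: "0 \<le> v" and rkv: "r = dyadic_point k v"
    using assms(1) by (rule dyadic_point_cover)
  obtain \<eta> where "0 < \<eta>" and \<eta>:
    "\<And>w w' i. 0 \<le> w \<Longrightarrow> w \<le> w' \<Longrightarrow> w' \<le> w + \<eta> \<Longrightarrow> dyadic_piece k w i - dyadic_piece k w' i \<le> \<epsilon>"
    using dyadic_piece_equicontinuous[OF assms(2)] by blast
  have "dyadic_point k (v + \<eta>) < r" using rkv v \<open>0 < \<eta>\<close> dyadic_point_strict_antimono by simp
  moreover have "0 \<le> dyadic_point k (v + \<eta>)"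
    using dyadic_point_bounds(1)[of "v + \<eta>" k] dyadic_pos[of k] v \<open>0 < \<eta>\<close> by simp
  moreover have "decay_path r i - \<epsilon> \<le> decay_path (dyadic_point k (v + \<eta>)) i" for i
    using \<eta>[of v "v + \<eta>" i] v \<open>0 < \<eta>\<close> rkv by (simp add: decay_path_dyadic_point)
  ultimately show ?thesis by blast
qed

lemma C0_path_of_decay_decay_path: "C0_path_of_decay G decay_path"
  unfolding C0_path_of_decay_def
proof (intro conjI allI impI)
  show "linf_pos (decay_path r)" "G (decay_path r) \<le> decay_path r" if "0 \<le> r" for r
    using that by (simp_all add: linf_pos_decay_path decay_path_decay)
  show "\<exists>\<phi>min \<phi>max. Kinf \<phi>min \<and> Kinf \<phi>max \<and> (\<forall>r\<ge>0. (\<lambda>_. \<phi>min r) \<le> decay_path r \<and> decay_path r \<le> (\<lambda>_. \<phi>max r))"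
    using Kinf_compose_mult[OF Kinf_ident, of "1 / 2"] Kinf_compose_mult[OF Kinf_\<phi>, of 2] decay_path_bounds
    by (intro exI[of _ "\<lambda>r. 1 / 2 * r"] exI[of _ "\<lambda>r. \<phi> (2 * r)"]) (auto simp: le_fun_def)
  show "decay_path r1 \<le> decay_path r2" if "0 \<le> r1 \<and> r1 \<le> r2" for r1 r2
    using that decay_path_mono by blast
  show "\<exists>\<delta>>0. \<forall>r'. r' \<ge> 0 \<and> \<bar>r' - r\<bar> < \<delta> \<longrightarrow> supnorm (decay_path r' - decay_path r) < \<epsilon>"
    if "0 \<le> r" "0 < \<epsilon>" for r \<epsilon>
    using decay_path_mono decay_path_right_approx[OF that(1)] decay_path_left_approx that
    by (rule monotone_family_supnorm_continuous)
qed

end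

context
  fixes Ii :: "'i \<Rightarrow> 'i set" and gam :: "'i \<Rightarrow> 'i \<Rightarrow> real \<Rightarrow> real"
    and mu :: "'i \<Rightarrow> ('i \<Rightarrow> real) \<Rightarrow> ennreal"
  assumes gain: "gain_operator Ii gam mu"
begin

lemma gain_operatorD:
  shows gain_operator_finite: "finite (Ii i)"
    and gain_operator_Kinf: "j \<in> Ii i \<Longrightarrow> Kinf (gam i j)"
    and gain_operator_mu_zero: "mu i (\<lambda>_. 0) = 0"
    and gain_operator_mu_mono: "linf_pos s \<Longrightarrow> linf_pos t \<Longrightarrow> s \<le> t \<Longrightarrow> mu i s \<le> mu i t"
    and gain_operator_mu_finite:
      "finite J \<Longrightarrow> linf_pos s \<Longrightarrow> (\<And>k. k \<notin> J \<Longrightarrow> s k = 0) \<Longrightarrow> mu i s \<noteq> \<infinity>"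
proof -
  have fin: "\<forall>i. finite (Ii i) \<and> i \<notin> Ii i"
    using gain unfolding gain_operator_def by (elim conjE)
  have K: "\<forall>i j. j \<in> Ii i \<longrightarrow> Kinf (gam i j)"
    using gain unfolding gain_operator_def by (elim conjE)
  have M1: "\<exists>\<xi>. Kinf \<xi> \<and> (\<forall>i. mu i (\<lambda>_. 0) = 0 \<and>
      (\<forall>s. linf_pos s \<longrightarrow> ennreal (\<xi> (supnorm s)) \<le> mu i s))"
    using gain unfolding gain_operator_def by (elim conjE)
  have M2: "\<forall>i s t. linf_pos s \<and> linf_pos t \<and> s \<le> t \<longrightarrow> mu i s \<le> mu i t"
    using gain unfolding gain_operator_def by (elim conjE)
  have M3: "\<forall>i J. finite J \<longrightarrow> (\<forall>s\<in>{s. linf_pos s \<and> (\<forall>k. k \<notin> J \<longrightarrow> s k = 0)}. mu i s \<noteq> \<infinity>)"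
    using gain unfolding gain_operator_def Let_def by (elim conjE) simp
  show "finite (Ii i)" using fin by blast
  show "j \<in> Ii i \<Longrightarrow> Kinf (gam i j)" using K by blast
  show "mu i (\<lambda>_. 0) = 0" using M1 by blast
  show "linf_pos s \<Longrightarrow> linf_pos t \<Longrightarrow> s \<le> t \<Longrightarrow> mu i s \<le> mu i t" using M2 by blast
  show "finite J \<Longrightarrow> linf_pos s \<Longrightarrow> (\<And>k. k \<notin> J \<Longrightarrow> s k = 0) \<Longrightarrow> mu i s \<noteq> \<infinity>"
    using M3 by blast
qed

lemma gvec_nonneg: "(\<And>j. 0 \<le> s j) \<Longrightarrow> 0 \<le> gvec Ii gam i s j"
  using gain_operator_Kinf Kinf_nonneg by (simp add: gvec_def)

lemma linf_pos_gvec: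
  assumes "\<And>j. 0 \<le> s j"
  shows "linf_pos (gvec Ii gam i s)"
proof (rule linf_posI[OF gvec_nonneg[OF assms]])
  have "0 \<le> gam i j (s j)" if "j \<in> Ii i" for j
    using Kinf_nonneg[OF gain_operator_Kinf[OF that] assms] .
  then show "gvec Ii gam i s j \<le> (\<Sum>j\<in>Ii i. gam i j (s j))" for j
    using gain_operator_finite[of i] by (auto simp: gvec_def intro!: member_le_sum sum_nonneg)
qed

lemma Gam_mono:
  assumes s: "\<And>i. 0 \<le> s i" and "s \<le> t"
  shows "Gam Ii gam mu s \<le> Gam Ii gam mu t"
  unfolding le_fun_def Gam_def
proof
  fix i
  have t: "0 \<le> t i" for i using s[of i] \<open>s \<le> t\<close> by (auto simp: le_fun_def intro: order_trans)
  have "gvec Ii gam i s \<le> gvec Ii gam i t"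
    using gain_operator_Kinf Kinf_mono s \<open>s \<le> t\<close> by (simp add: gvec_def le_fun_def)
  then have "mu i (gvec Ii gam i s) \<le> mu i (gvec Ii gam i t)"
    using linf_pos_gvec[OF s] linf_pos_gvec[OF t] by (intro gain_operator_mu_mono)
  moreover have "mu i (gvec Ii gam i t) \<noteq> \<infinity>"
    using gain_operator_finite[of i] linf_pos_gvec[OF t] by (rule gain_operator_mu_finite) (simp add: gvec_def)
  ultimately show "enn2real (mu i (gvec Ii gam i s)) \<le> enn2real (mu i (gvec Ii gam i t))"
    by (intro enn2real_mono) (auto simp: less_top)
qed

lemma Gam_zero: "Gam Ii gam mu (\<lambda>_. 0) = (\<lambda>_. 0)"
proof -
  have "gvec Ii gam i (\<lambda>_. 0) = (\<lambda>_. 0)" for i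
    using gain_operator_Kinf by (auto simp: gvec_def Kinf_def)
  then show ?thesis by (simp add: Gam_def gain_operator_mu_zero)
qed

end

theorem theorem3p24:
  fixes Ii :: "'i::countable \<Rightarrow> 'i set"
    and gam :: "'i \<Rightarrow> 'i \<Rightarrow> real \<Rightarrow> real"
    and mu :: "'i \<Rightarrow> ('i \<Rightarrow> real) \<Rightarrow> ennreal"
  assumes "gain_operator Ii gam mu"
    and "oplus_MBI (Gam Ii gam mu)"
    and "\<forall>r\<ge>0. \<forall>\<sigma>. max_fixed_point (\<lambda>s. omax (\<lambda>_. r) (Gam Ii gam mu s)) \<sigma>
            \<longrightarrow> semi_attractive_above (\<lambda>s. omax (\<lambda>_. r) (Gam Ii gam mu s)) \<sigma>"
  shows "\<exists>\<sigma>. C0_path_of_decay (Gam Ii gam mu) \<sigma>"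
proof -
  obtain \<phi> where "Kinf \<phi>" and MBI: "\<forall>s b. linf_pos s \<and> linf_pos b \<and> s \<le> omax b (Gam Ii gam mu s)
      \<longrightarrow> supnorm s \<le> \<phi> (supnorm b)"
    using assms(2) unfolding oplus_MBI_def by blast
  interpret decay_path_construction "Gam Ii gam mu" \<phi>
  proof
    show "Gam Ii gam mu s \<le> Gam Ii gam mu t" if "\<And>i. 0 \<le> s i" "s \<le> t" for s t
      using assms(1) that by (rule Gam_mono)
  qed (use \<open>Kinf \<phi>\<close> MBI Gam_zero[OF assms(1)] assms(3) in auto)
  show ?thesis using C0_path_of_decay_decay_path by blast
qed

end
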